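(* (1) If $\#A\ge3$, the constant $2$ in Proposition 9 is optimal: for every $c<2$ there exist probabilities $p,q$ on $A$ with $p\ne q$ such that $\mathbb P[g(U,p)\ne g(U,q)]>c\|p-q\|$, where $U$ is uniform on $S$. (2) Let $N=\#A\ge2$ and let $(Z_p)_p$ be a family of random variables defined on a common probability space, indexed by the probabilities $p$ on $A$, such that each $Z_p$ has law $p$. Then there exist two probabilities $p\ne q$ on $A$ such that $$\mathbb P[Z_p\ne Z_q]\ge 2\Big(1-\frac1N\Big)\|p-q\|.$$
   Context: $A$ finite with a fixed total order; $(E_a)_{a\in A}$ canonical basis of $\mathbb R^A$; $H=\{x\in\mathbb R^A:\sum_ax_a=1\}$; $S=(\mathbb R_+)^A\cap H$ with its uniform law. For a probability $p$ on $A$: $G(p)=\sum_ap(a)E_a$; $S_a(p)=\mathrm{Conv}(\{G(p)\}\cup\{E_b:b\ne a\})$; $g(s,p)=\min\{a:s\in S_a(p)\}$. $\|p-q\|=\frac12\sum_a|p(a)-q(a)|$. Proposition 9 states $\mathbb P[g(U,p)\ne g(U,q)]\le2\|p-q\|$ for all $p,q$. *)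

theory Defs
  imports "HOL-Probability.Probability"
begin

text \<open>A is the finite, totally ordered type 'a. Points of R^A are vectors of type real^'a.\<close>

definition is_prob :: "('a::finite \<Rightarrow> real) \<Rightarrow> bool" where
  "is_prob p \<longleftrightarrow> (\<forall>a. 0 \<le> p a) \<and> (\<Sum>a\<in>UNIV. p a) = 1"

definition tv_dist :: "('a::finite \<Rightarrow> real) \<Rightarrow> ('a \<Rightarrow> real) \<Rightarrow> real" where
  "tv_dist p q = (1/2) * (\<Sum>a\<in>UNIV. \<bar>p a - q a\<bar>)"

definition E :: "'a::finite \<Rightarrow> (real, 'a) vec" where
  "E a = axis a 1"

definition G :: "('a::finite \<Rightarrow> real) \<Rightarrow> (real, 'a) vec" where
  "G p = (\<chi> a. p a)"

definition Sa :: "'a::finite \<Rightarrow> ('a \<Rightarrow> real) \<Rightarrow> (real^'a) set" where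
  "Sa a p = convex hull (insert (G p) {E b | b. b \<noteq> a})"

definition g :: "real^('a::{finite,linorder}) \<Rightarrow> ('a \<Rightarrow> real) \<Rightarrow> 'a" where
  "g s p = (LEAST a. s \<in> Sa a p)"

text \<open>Uniform law on the simplex S: (N-1)-dimensional Lebesgue measure on the hyperplane H,
  realised through the affine chart which forgets the coordinate a0 (the least element of A);
  all such charts induce proportional measures, so the normalised law does not depend on it.\<close>

definition a0 :: "'a::{finite,linorder}" where
  "a0 = Min UNIV"

definition chart_dom :: "('a::{finite,linorder} \<Rightarrow> real) measure" where
  "chart_dom = PiM (UNIV - {a0}) (\<lambda>_. lborel)"

definition chart_simplex :: "('a::{finite,linorder} \<Rightarrow> real) set" where
  "chart_simplex = {y \<in> space chart_dom. (\<forall>b\<in>UNIV - {a0}. 0 \<le> y b) \<and> (\<Sum>b\<in>UNIV - {a0}. y b) \<le> 1}"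

definition lift :: "('a::{finite,linorder} \<Rightarrow> real) \<Rightarrow> (real, 'a) vec" where
  "lift y = (\<chi> a. if a = a0 then 1 - (\<Sum>b\<in>UNIV - {a0}. y b) else y a)"

definition unifS :: "(real^('a::{finite,linorder})) measure" where
  "unifS = distr (uniform_measure chart_dom chart_simplex) borel lift"

end

theory Submission
  imports Defs
begin

text \<open>
  Take two coordinates b, d different from the
  least element a0 and, for small \<epsilon>, the laws shift_mass \<epsilon> b and shift_mass \<epsilon> d, which
  move mass \<epsilon> from a0 to b resp. d; their total variation distance is \<epsilon>.  For a law carried
  by two points the sets Sa are explicit half-spaces of the simplex, so g(s, shift_mass \<epsilon> x)
  leaves a0 exactly on an "escape region" of probability \<epsilon> (a Fubini computation along the
  coordinate x in the affine chart that defines the uniform law).  The two escape regions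
  overlap in probability at most \<epsilon>^2 (N-1)!, hence the rules disagree with probability at
  least 2\<epsilon> - 2\<epsilon>^2 (N-1)!, which beats c\<epsilon> for every c < 2 once \<epsilon> is small.

  Let X a be the variable attached to the uniform
  law on A - {a}, so X a \<noteq> a almost surely.  A fixed-point-free map on A disagrees on at least
  2(N-1) ordered pairs, so the expected number of disagreeing pairs (a,b), a \<noteq> b, is at least
  2(N-1); by averaging over the N(N-1) pairs some pair disagrees with probability at least 2/N,
  while the total variation distance of the two laws is 1/(N-1).
\<close>

subsection \<open>Two-point laws and the decision rule g\<close>

lemma E_nth: "E a $ x = (if x = a then 1 else 0)"
  by (simp add: E_def axis_def)

lemma G_nth: "G p $ x = p x"
  by (simp add: G_def)

text \<open>Sa u p lies in the half-space where the ratio of the coordinates u and v is at most that of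
  p: the inequality holds at G p and at every vertex E b with b \<noteq> u, and it is convex.\<close>

lemma Sa_subset_halfspace:
  fixes p :: "'a::finite \<Rightarrow> real"
  assumes uv: "u \<noteq> v" and pu: "0 \<le> p u"
  shows "Sa u p \<subseteq> {s. p v * s$u \<le> p u * s$v}"
  unfolding Sa_def
proof (rule hull_minimal)
  show "insert (G p) {E b |b. b \<noteq> u} \<subseteq> {s. p v * s$u \<le> p u * s$v}"
    using uv pu by (auto simp: G_nth E_nth)
  have "{s. p v * s$u \<le> p u * s$v} = {s. (p v *\<^sub>R axis u 1 - p u *\<^sub>R axis v 1) \<bullet> s \<le> 0}"
    by (simp add: inner_diff_left inner_axis')
  then show "convex {s. p v * s$u \<le> p u * s$v}"
    by (simp add: convex_halfspace_le)
qed

text \<open>Conversely, for a law carried by two points u and v, the half-space inside the simplex is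
  covered by Sa u p: s is written as a convex combination of G p and the vertices E x, x \<noteq> u.\<close>

lemma two_point_in_Sa:
  fixes p :: "'a::finite \<Rightarrow> real" and s :: "real^'a"
  assumes uv: "u \<noteq> v" and pu: "0 < p u" and puv: "p u + p v = 1"
    and support: "\<And>x. x \<noteq> u \<Longrightarrow> x \<noteq> v \<Longrightarrow> p x = 0"
    and s_nonneg: "\<And>x. 0 \<le> s$x" and s_sum: "(\<Sum>x\<in>UNIV. s$x) = 1"
    and half: "p v * s$u \<le> p u * s$v"
  shows "s \<in> Sa u p"
proof -
  define l where "l = s$u / p u"
  define w where "w x = (if x = u then l else if x = v then s$v - l * p v else s$x)" for x
  define y where "y x = (if x = u then G p else E x)" for x
  have w_nonneg: "0 \<le> w x" for x
    using s_nonneg half pu by (auto simp: w_def l_def field_simps)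
  have "(\<Sum>x\<in>UNIV. w x) = (\<Sum>x\<in>UNIV. s$x + (if x = u then l - s$u else 0) + (if x = v then - (l * p v) else 0))"
    by (rule sum.cong) (auto simp: w_def uv)
  also have "\<dots> = 1 + (l * (1 - p v) - s$u)"
    by (simp add: sum.distrib s_sum algebra_simps)
  also have "l * (1 - p v) - s$u = 0"
    using pu by (simp add: l_def flip: puv)
  finally have w_sum: "(\<Sum>x\<in>UNIV. w x) = 1" by simp
  have comb: "(\<Sum>x\<in>UNIV. w x *\<^sub>R y x) \<in> Sa u p"
    unfolding Sa_def
    by (rule convex_sum) (use w_sum w_nonneg in \<open>auto simp: y_def intro: hull_inc\<close>)
  have coord: "(\<Sum>x\<in>UNIV. w x *\<^sub>R y x) $ k = s $ k" for k
  proof -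
    have "(\<Sum>x\<in>UNIV. w x *\<^sub>R y x) $ k = (\<Sum>x\<in>UNIV. (if x = u then l * p k else 0) + (if x = k \<and> k \<noteq> u then w k else 0))"
      by (simp, rule sum.cong) (auto simp: y_def G_nth E_nth w_def)
    also have "\<dots> = l * p k + (if k = u then 0 else w k)"
      by (simp add: sum.distrib)
    also have "\<dots> = s $ k"
      using pu uv support[of k] by (auto simp: w_def l_def)
    finally show ?thesis .
  qed
  then have "(\<Sum>x\<in>UNIV. w x *\<^sub>R y x) = s"
    unfolding vec_eq_iff by blast
  with comb show ?thesis by simp
qed

lemma a0_le: "(a0 :: 'a::{finite,linorder}) \<le> x"
  unfolding a0_def by (rule Min_le) auto

lemma g_in_Sa:
  fixes s :: "real^('a::{finite,linorder})"
  assumes "s \<in> Sa a p"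
  shows "s \<in> Sa (g s p) p"
proof -
  have "g s p = Min {x. s \<in> Sa x p}"
    unfolding g_def by (rule Least_Min) (use assms in auto)
  also have "\<dots> \<in> {x. s \<in> Sa x p}"
    by (rule Min_in) (use assms in auto)
  finally show ?thesis by simp
qed

lemma g_two_point:
  fixes s :: "real^('a::{finite,linorder})" and p :: "'a \<Rightarrow> real"
  assumes v: "v \<noteq> a0" and pos: "0 < p a0" "0 < p v" and sum: "p a0 + p v = 1"
    and support: "\<And>x. x \<noteq> a0 \<Longrightarrow> x \<noteq> v \<Longrightarrow> p x = 0"
    and s_nonneg: "\<And>x. 0 \<le> s$x" and s_sum: "(\<Sum>x\<in>UNIV. s$x) = 1"
  shows "g s p = a0 \<longleftrightarrow> p v * s$a0 \<le> p a0 * s$v"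
proof
  assume "g s p = a0"
  moreover have "s \<in> Sa (g s p) p"
  proof -
    have "s \<in> Sa a0 p \<or> s \<in> Sa v p"
    proof (cases "p v * s$a0 \<le> p a0 * s$v")
      case True
      then show ?thesis
        using two_point_in_Sa[of a0 v p s] v pos sum support s_nonneg s_sum by auto
    next
      case False
      then show ?thesis
        using two_point_in_Sa[of v a0 p s] v pos sum support s_nonneg s_sum by auto
    qed
    then show ?thesis by (auto intro: g_in_Sa)
  qed
  ultimately show "p v * s$a0 \<le> p a0 * s$v"
    using Sa_subset_halfspace[OF v[symmetric], of p] pos by auto
next
  assume "p v * s$a0 \<le> p a0 * s$v"
  then have "s \<in> Sa a0 p"
    using two_point_in_Sa[of a0 v p s] v pos sum support s_nonneg s_sum by auto
  then show "g s p = a0"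
    unfolding g_def by (rule Least_equality) (rule a0_le)
qed

lemma Sa_closed: "closed (Sa a p)"
  unfolding Sa_def
  by (intro compact_imp_closed compact_convex_hull finite_imp_compact) auto

lemma pred_Sa[measurable]: "Measurable.pred borel (\<lambda>s. s \<in> Sa a p)"
  using Sa_closed[of a p] by (simp add: pred_def borel_closed)

text \<open>An explicit description of the fibres of g (the second disjunct covers points outside
  every Sa a p, where the least element of the empty predicate is returned); it shows that the
  fibres are Borel.\<close>

lemma g_eq_iff:
  fixes s :: "real^('a::{finite,linorder})"
  shows "g s p = a \<longleftrightarrow> (s \<in> Sa a p \<and> (\<forall>y. y < a \<longrightarrow> s \<notin> Sa y p)) \<or>
      ((\<forall>x. s \<notin> Sa x p) \<and> (LEAST x::'a. False) = a)"
proof (cases "\<exists>x. s \<in> Sa x p")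
  case True
  have "g s p = Min {x. s \<in> Sa x p}"
    unfolding g_def by (rule Least_Min) (use True in auto)
  moreover have "Min {x. s \<in> Sa x p} = a \<longleftrightarrow> s \<in> Sa a p \<and> (\<forall>y. y < a \<longrightarrow> s \<notin> Sa y p)"
    using True by (subst Min_eq_iff) (auto simp: not_less[symmetric])
  ultimately show ?thesis using True by auto
next
  case False
  then show ?thesis unfolding g_def by simp
qed

lemma g_disagreement_borel:
  "{s. g s p \<noteq> g s q} \<in> sets (borel :: (real^('a::{finite,linorder})) measure)"
proof -
  have fibre: "{s :: (real, 'a) vec. g s p' = a} \<in> sets borel" for p' and a :: 'a
    by (simp only: g_eq_iff) measurable
  have "{s. g s p \<noteq> g s q} = (\<Union>a. {s. g s p = a} - {s. g s q = a})" by auto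
  then show ?thesis using fibre by auto
qed

subsection \<open>The affine chart of the simplex\<close>

abbreviation chart_coords :: "'a::{finite,linorder} set" where
  "chart_coords \<equiv> UNIV - {a0}"

lemma lift_nth: "lift y $ a = (if a = a0 then 1 - (\<Sum>b\<in>chart_coords. y b) else y a)"
  by (simp add: lift_def)

lemma lift_measurable: "lift \<in> borel_measurable (chart_dom :: ('a::{finite,linorder} \<Rightarrow> real) measure)"
proof (subst borel_measurable_euclidean_space, intro ballI)
  fix i :: "(real, 'a) vec" assume "i \<in> Basis"
  then obtain k where k: "i = axis k 1" by (auto simp: Basis_vec_def)
  have "(\<lambda>y. lift y \<bullet> i) = (\<lambda>y. if k = a0 then 1 - (\<Sum>b\<in>chart_coords. y b) else y k)"
    by (simp add: k inner_axis lift_nth)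
  also have "\<dots> \<in> borel_measurable (chart_dom :: ('a \<Rightarrow> real) measure)"
    unfolding chart_dom_def by (cases "k = a0") simp_all
  finally show "(\<lambda>y. lift y \<bullet> i) \<in> borel_measurable chart_dom" .
qed

lemma chart_simplex_sets: "chart_simplex \<in> sets (chart_dom :: ('a::{finite,linorder} \<Rightarrow> real) measure)"
  unfolding chart_simplex_def chart_dom_def by measurable

lemma emeasure_chart_simplex:
  "emeasure (chart_dom :: ('a::{finite,linorder} \<Rightarrow> real) measure) chart_simplex
     = ennreal (1 / fact (CARD('a) - 1))"
proof -
  have simplex: "chart_simplex = {x. (\<forall>i\<in>chart_coords. 0 \<le> x i) \<and> sum x chart_coords \<le> 1}
                          \<inter> space (chart_dom :: ('a \<Rightarrow> real) measure)"
    by (auto simp: chart_simplex_def)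
  have "emeasure (chart_dom :: ('a \<Rightarrow> real) measure) chart_simplex
               = ennreal (1 ^ card (chart_coords :: 'a set) / fact (card (chart_coords :: 'a set)))"
    unfolding simplex chart_dom_def by (rule emeasure_std_simplex_aux) auto
  then show ?thesis by (simp add: card_Diff_singleton)
qed

lemma lift_in_simplex:
  fixes y :: "'a::{finite,linorder} \<Rightarrow> real"
  assumes "y \<in> chart_simplex"
  shows "\<And>a. 0 \<le> lift y $ a" and "(\<Sum>a\<in>UNIV. lift y $ a) = 1"
proof -
  have nonneg: "\<forall>i\<in>chart_coords. 0 \<le> y i" and sum_le: "(\<Sum>i\<in>chart_coords. y i) \<le> 1"
    using assms by (auto simp: chart_simplex_def)
  show "0 \<le> lift y $ a" for a
    using nonneg sum_le by (auto simp: lift_nth)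
  have "(\<Sum>a\<in>UNIV. lift y $ a) = lift y $ a0 + (\<Sum>a\<in>chart_coords. lift y $ a)"
    by (simp add: sum.remove)
  also have "(\<Sum>a\<in>chart_coords. lift y $ a) = (\<Sum>a\<in>chart_coords. y a)"
    by (rule sum.cong) (auto simp: lift_nth)
  finally show "(\<Sum>a\<in>UNIV. lift y $ a) = 1" by (simp add: lift_nth)
qed

text \<open>Fubini along one coordinate b: in a region of R^I where the b-th coordinate ranges over a
  set of length phi * (1 - (sum of the other coordinates)), the other coordinates being nonnegative
  and satisfying a condition Q, the volume is phi times the integral of that length factor.\<close>

lemma emeasure_strip:
  fixes I :: "'i set" and Q :: "('i \<Rightarrow> real) \<Rightarrow> bool" and Iv :: "real \<Rightarrow> real set"
  assumes fin: "finite I" and b: "b \<in> I" and phi: "0 \<le> \<phi>"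
    and Q_meas: "Measurable.pred (PiM (I - {b}) (\<lambda>_. lborel)) Q"
    and Q_indep: "\<And>y t. Q (y(b := t)) = Q y"
    and Iv_length: "\<And>L. emeasure lborel (Iv L) = ennreal L" and Iv_sets: "\<And>L. Iv L \<in> sets borel"
    and R_eq: "R = {y \<in> space (PiM I (\<lambda>_. lborel)). (\<forall>i\<in>I-{b}. 0 \<le> y i) \<and> Q y \<and>
                      y b \<in> Iv (\<phi> * (1 - (\<Sum>i\<in>I-{b}. y i)))}"
    and R_sets: "R \<in> sets (PiM I (\<lambda>_. lborel))"
  shows "emeasure (PiM I (\<lambda>_. lborel)) R = ennreal \<phi> *
           (\<integral>\<^sup>+x. indicator {x \<in> space (PiM (I-{b}) (\<lambda>_. lborel)). (\<forall>i\<in>I-{b}. 0 \<le> x i) \<and> Q x} x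
                  * ennreal (1 - (\<Sum>i\<in>I-{b}. x i)) \<partial>PiM (I-{b}) (\<lambda>_. lborel))"
proof -
  interpret product_sigma_finite "\<lambda>_. lborel" by standard
  define J where "J = I - {b}"
  have I_eq: "I = insert b J" and J: "finite J" "b \<notin> J" using fin b by (auto simp: J_def)
  define C where "C = {x \<in> space (PiM J (\<lambda>_. lborel)). (\<forall>i\<in>J. 0 \<le> x i) \<and> Q x}"
  have [measurable]: "Measurable.pred (PiM J (\<lambda>_. lborel)) Q" using Q_meas by (simp add: J_def)
  have C_sets[measurable]: "C \<in> sets (PiM J (\<lambda>_. lborel))" unfolding C_def using J by measurable
  have slice: "(\<integral>\<^sup>+ t. indicator R (x(b := t)) \<partial>lborel) = indicator C x * ennreal (\<phi> * (1 - (\<Sum>i\<in>J. x i)))"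
    if x: "x \<in> space (PiM J (\<lambda>_. lborel))" for x
  proof -
    have "(\<Sum>i\<in>J. (x(b := t)) i) = (\<Sum>i\<in>J. x i)" for t
      using J by (intro sum.cong) auto
    moreover have "x(b := t) \<in> space (PiM I (\<lambda>_. lborel))" for t
      using x I_eq by (auto simp: space_PiM PiE_def extensional_def)
    ultimately have "indicator R (x(b := t)) = indicator C x * (indicator (Iv (\<phi> * (1 - (\<Sum>i\<in>J. x i)))) t :: ennreal)" for t
      using x J unfolding R_eq C_def J_def[symmetric] by (auto simp: indicator_def Q_indep)
    then have "(\<integral>\<^sup>+ t. indicator R (x(b := t)) \<partial>lborel) = indicator C x * emeasure lborel (Iv (\<phi> * (1 - (\<Sum>i\<in>J. x i))))"
      using Iv_sets by (simp add: nn_integral_cmult)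
    then show ?thesis by (simp add: Iv_length)
  qed
  have "emeasure (PiM I (\<lambda>_. lborel)) R = \<integral>\<^sup>+ y. indicator R y \<partial>PiM (insert b J) (\<lambda>_. lborel)"
    using R_sets I_eq by simp
  also have "\<dots> = \<integral>\<^sup>+ x. \<integral>\<^sup>+ t. indicator R (x(b := t)) \<partial>lborel \<partial>PiM J (\<lambda>_. lborel)"
    by (rule product_nn_integral_insert[OF J]) (use R_sets I_eq in simp)
  also have "\<dots> = \<integral>\<^sup>+ x. ennreal \<phi> * (indicator C x * ennreal (1 - (\<Sum>i\<in>J. x i))) \<partial>PiM J (\<lambda>_. lborel)"
    using phi by (intro nn_integral_cong) (simp add: slice ennreal_mult' mult_ac)
  also have "\<dots> = ennreal \<phi> * \<integral>\<^sup>+ x. indicator C x * ennreal (1 - (\<Sum>i\<in>J. x i)) \<partial>PiM J (\<lambda>_. lborel)"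
    by (rule nn_integral_cmult) (use J in measurable)
  finally show ?thesis unfolding C_def J_def .
qed

text \<open>The integral that appears when the constraint z d < \<epsilon> is imposed is at most \<epsilon>:
  the integrand vanishes outside a box with one side of length \<epsilon> and the others of length 1.\<close>

lemma nn_integral_strip_le:
  fixes J :: "'i set"
  assumes J: "finite J" "d \<in> J" and eps: "0 \<le> \<epsilon>"
  shows "(\<integral>\<^sup>+z. indicator {z \<in> space (PiM J (\<lambda>_. lborel)). (\<forall>i\<in>J. 0 \<le> z i) \<and> z d < \<epsilon>} z
            * ennreal (1 - (\<Sum>i\<in>J. z i)) \<partial>PiM J (\<lambda>_. lborel)) \<le> ennreal \<epsilon>"
    (is "(\<integral>\<^sup>+z. indicator ?C z * _ \<partial>_) \<le> _")
proof -
  interpret product_sigma_finite "\<lambda>_. lborel" by standard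
  define box where "box j = (if j = d then {0..<\<epsilon>} else {0..1::real})" for j
  have "(\<integral>\<^sup>+z. indicator ?C z * ennreal (1 - (\<Sum>i\<in>J. z i)) \<partial>PiM J (\<lambda>_. lborel))
          \<le> (\<integral>\<^sup>+z. indicator (PiE J box) z \<partial>PiM J (\<lambda>_. lborel))"
  proof (rule nn_integral_mono)
    fix z :: "'i \<Rightarrow> real" assume z: "z \<in> space (PiM J (\<lambda>_. lborel))"
    show "indicator ?C z * ennreal (1 - (\<Sum>i\<in>J. z i)) \<le> indicator (PiE J box) z"
    proof (cases "z \<in> ?C \<and> (\<Sum>i\<in>J. z i) \<le> 1")
      case True
      then have nonneg: "\<forall>i\<in>J. 0 \<le> z i" and "z d < \<epsilon>" and "(\<Sum>i\<in>J. z i) \<le> 1" by auto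
      moreover have "z i \<le> 1" if "i \<in> J" for i
        using member_le_sum[of i J z] nonneg that J \<open>(\<Sum>i\<in>J. z i) \<le> 1\<close> by auto
      ultimately have "z \<in> PiE J box" using z by (auto simp: space_PiM PiE_def box_def)
      then show ?thesis using True nonneg by (auto simp: indicator_def sum_nonneg)
    next
      case False
      then show ?thesis by (auto simp: indicator_def ennreal_neg)
    qed
  qed
  also have "\<dots> = emeasure (PiM J (\<lambda>_. lborel)) (PiE J box)"
    by (rule nn_integral_indicator) (auto intro!: sets_PiM_I_finite J simp: box_def)
  also have "\<dots> = (\<Prod>j\<in>J. emeasure lborel (box j))"
    by (rule emeasure_PiM[OF J(1)]) (simp add: box_def)
  also have "\<dots> = (\<Prod>j\<in>J. if j = d then ennreal \<epsilon> else 1)"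
    using eps by (intro prod.cong) (auto simp: box_def)
  also have "\<dots> = ennreal \<epsilon>" using J by simp
  finally show ?thesis .
qed

subsection \<open>Part (1): the constant 2 cannot be improved\<close>

definition shift_mass :: "real \<Rightarrow> 'a::{finite,linorder} \<Rightarrow> 'a \<Rightarrow> real" where
  "shift_mass \<epsilon> x = (\<lambda>z. if z = a0 then 1 - \<epsilon> else if z = x then \<epsilon> else 0)"

lemma is_prob_shift_mass:
  assumes "x \<noteq> a0" "0 \<le> \<epsilon>" "\<epsilon> \<le> 1"
  shows "is_prob (shift_mass \<epsilon> x)"
proof -
  have "(\<Sum>z\<in>UNIV. shift_mass \<epsilon> x z) = (\<Sum>z\<in>{a0, x}. shift_mass \<epsilon> x z)"
    by (rule sum.mono_neutral_right) (auto simp: shift_mass_def)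
  also have "\<dots> = 1" using assms by (simp add: shift_mass_def)
  finally show ?thesis using assms by (auto simp: is_prob_def shift_mass_def)
qed

lemma tv_dist_shift_mass:
  assumes "b \<noteq> a0" "d \<noteq> a0" "b \<noteq> d" "0 \<le> \<epsilon>"
  shows "tv_dist (shift_mass \<epsilon> b) (shift_mass \<epsilon> d) = \<epsilon>"
proof -
  have "(\<Sum>z\<in>UNIV. \<bar>shift_mass \<epsilon> b z - shift_mass \<epsilon> d z\<bar>)
          = (\<Sum>z\<in>{b, d}. \<bar>shift_mass \<epsilon> b z - shift_mass \<epsilon> d z\<bar>)"
    by (rule sum.mono_neutral_right) (auto simp: shift_mass_def)
  also have "\<dots> = 2 * \<epsilon>" using assms by (simp add: shift_mass_def)
  finally show ?thesis by (simp add: tv_dist_def)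
qed

lemma shift_mass_inj:
  assumes "b \<noteq> a0" "b \<noteq> d" "\<epsilon> \<noteq> 0"
  shows "shift_mass \<epsilon> b \<noteq> shift_mass \<epsilon> d"
proof
  assume "shift_mass \<epsilon> b = shift_mass \<epsilon> d"
  then have "shift_mass \<epsilon> b b = shift_mass \<epsilon> d b" by simp
  then show False using assms by (simp add: shift_mass_def)
qed

definition escape_region :: "real \<Rightarrow> 'a::{finite,linorder} \<Rightarrow> ('a \<Rightarrow> real) set" where
  "escape_region \<epsilon> x = {y \<in> space chart_dom. (\<forall>i\<in>chart_coords - {x}. 0 \<le> y i) \<and>
                            0 \<le> y x \<and> y x < \<epsilon> * (1 - (\<Sum>i\<in>chart_coords - {x}. y i))}"

lemma escape_region_sets:
  assumes "x \<noteq> a0"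
  shows "escape_region \<epsilon> x \<in> sets chart_dom"
proof -
  have "x \<in> chart_coords" using assms by simp
  then show ?thesis unfolding escape_region_def chart_dom_def by measurable
qed

lemma sum_chart_coords_remove:
  fixes y :: "'a::{finite,linorder} \<Rightarrow> real"
  assumes "x \<noteq> a0"
  shows "(\<Sum>i\<in>chart_coords. y i) = y x + (\<Sum>i\<in>chart_coords - {x}. y i)"
  using assms by (simp add: sum.remove)

lemma escape_region_subset:
  assumes x: "x \<noteq> a0" and eps: "0 \<le> \<epsilon>" "\<epsilon> \<le> 1"
  shows "escape_region \<epsilon> x \<subseteq> chart_simplex"
proof
  fix y :: "'a \<Rightarrow> real" assume y: "y \<in> escape_region \<epsilon> x"
  let ?rest = "\<Sum>i\<in>chart_coords - {x}. y i"
  have nonneg: "\<forall>i\<in>chart_coords. 0 \<le> y i" and yx: "y x < \<epsilon> * (1 - ?rest)"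
    using y x by (auto simp: escape_region_def)
  have "0 \<le> y x" using nonneg x by simp
  have "0 < 1 - ?rest"
  proof (rule ccontr)
    assume "\<not> 0 < 1 - ?rest"
    then have "\<epsilon> * (1 - ?rest) \<le> 0" using eps by (simp add: mult_nonneg_nonpos)
    then show False using yx \<open>0 \<le> y x\<close> by linarith
  qed
  then have "\<epsilon> * (1 - ?rest) \<le> 1 - ?rest" using eps mult_right_mono[of \<epsilon> 1 "1 - ?rest"] by simp
  then have "y x \<le> 1 - ?rest" using yx by simp
  then have "(\<Sum>i\<in>chart_coords. y i) \<le> 1" using sum_chart_coords_remove[OF x, of y] by simp
  then show "y \<in> chart_simplex"
    using nonneg y by (auto simp: chart_simplex_def escape_region_def)
qed

lemma g_shift_mass_iff:
  fixes y :: "'a::{finite,linorder} \<Rightarrow> real"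
  assumes x: "x \<noteq> a0" and eps: "0 < \<epsilon>" "\<epsilon> < 1" and y: "y \<in> chart_simplex"
  shows "g (lift y) (shift_mass \<epsilon> x) \<noteq> a0 \<longleftrightarrow> y \<in> escape_region \<epsilon> x"
proof -
  let ?rest = "\<Sum>i\<in>chart_coords - {x}. y i"
  have "g (lift y) (shift_mass \<epsilon> x) = a0
          \<longleftrightarrow> shift_mass \<epsilon> x x * lift y $ a0 \<le> shift_mass \<epsilon> x a0 * lift y $ x"
    by (rule g_two_point[OF x]) (use x eps lift_in_simplex[OF y] in \<open>auto simp: shift_mass_def\<close>)
  also have "\<dots> \<longleftrightarrow> \<epsilon> * lift y $ a0 \<le> (1 - \<epsilon>) * lift y $ x"
    using x by (simp add: shift_mass_def)
  also have "\<dots> \<longleftrightarrow> \<epsilon> * (1 - ?rest) \<le> y x"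
    using x sum_chart_coords_remove[OF x, of y] by (simp add: lift_nth algebra_simps)
  finally have "g (lift y) (shift_mass \<epsilon> x) \<noteq> a0 \<longleftrightarrow> y x < \<epsilon> * (1 - ?rest)" by linarith
  moreover have "y \<in> escape_region \<epsilon> x \<longleftrightarrow> y x < \<epsilon> * (1 - ?rest)"
    using y x by (auto simp: escape_region_def chart_simplex_def)
  ultimately show ?thesis by simp
qed

lemma emeasure_interval_length:
  "emeasure lborel {0..<L} = ennreal L" "emeasure lborel {0..L} = ennreal L"
  by (cases "0 \<le> L"; simp add: ennreal_neg)+

text \<open>The escape region occupies the proportion \<epsilon> of the simplex: slicing along the
  coordinate x, each fibre of the simplex is an interval of which it keeps the fraction \<epsilon>.\<close>

lemma emeasure_escape_region:
  fixes x :: "'a::{finite,linorder}"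
  assumes x: "x \<noteq> a0" and eps: "0 \<le> \<epsilon>"
  shows "emeasure chart_dom (escape_region \<epsilon> x) = ennreal \<epsilon> * emeasure chart_dom (chart_simplex :: ('a \<Rightarrow> real) set)"
proof -
  let ?J = "chart_coords - {x}"
  let ?K = "\<integral>\<^sup>+z. indicator {z \<in> space (PiM ?J (\<lambda>_. lborel)). (\<forall>i\<in>?J. 0 \<le> z i) \<and> True} z
              * ennreal (1 - (\<Sum>i\<in>?J. z i)) \<partial>PiM ?J (\<lambda>_. lborel)"
  have xI: "x \<in> chart_coords" using x by simp
  have "emeasure chart_dom (escape_region \<epsilon> x) = ennreal \<epsilon> * ?K"
    unfolding chart_dom_def
    by (rule emeasure_strip[OF _ xI eps, where Iv = "\<lambda>L. {0..<L}"])
       (use escape_region_sets[OF x] in \<open>auto simp: escape_region_def chart_dom_def emeasure_interval_length\<close>)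
  moreover have "emeasure chart_dom (chart_simplex :: ('a \<Rightarrow> real) set) = ennreal 1 * ?K"
  proof -
    have simplex_eq: "chart_simplex = {y \<in> space (PiM chart_coords (\<lambda>_. lborel)). (\<forall>i\<in>?J. 0 \<le> y i) \<and> True \<and>
                            y x \<in> {0..1 * (1 - (\<Sum>i\<in>?J. y i))}}"
      using sum_chart_coords_remove[OF x] xI by (auto simp: chart_simplex_def chart_dom_def)
    have simplex_sets: "chart_simplex \<in> sets (PiM chart_coords (\<lambda>_. lborel))"
      using chart_simplex_sets by (simp add: chart_dom_def)
    show ?thesis unfolding chart_dom_def
      by (rule emeasure_strip[OF _ xI _ _ _ emeasure_interval_length(2) _ simplex_eq simplex_sets]) auto
  qed
  ultimately show ?thesis by simp
qed

text \<open>Two escape regions overlap only in a set of volume at most \<epsilon>^2: on the overlap the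
  coordinate d is below \<epsilon>, and slicing along b contributes another factor \<epsilon>.\<close>

lemma emeasure_escape_overlap:
  fixes b d :: "'a::{finite,linorder}"
  assumes b: "b \<noteq> a0" and d: "d \<noteq> a0" "d \<noteq> b" and eps: "0 \<le> \<epsilon>"
  shows "emeasure chart_dom (escape_region \<epsilon> b \<inter> escape_region \<epsilon> d) \<le> ennreal (\<epsilon> * \<epsilon>)"
proof -
  let ?J = "chart_coords - {b}"
  define B where "B = {y \<in> space (PiM chart_coords (\<lambda>_. lborel)). (\<forall>i\<in>?J. 0 \<le> y i) \<and> y d < \<epsilon> \<and>
                         0 \<le> y b \<and> y b < \<epsilon> * (1 - (\<Sum>i\<in>?J. y i))}"
  have bI: "b \<in> chart_coords" and dI: "d \<in> chart_coords" and dJ: "d \<in> ?J" using b d by auto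
  have B_sets: "B \<in> sets (PiM chart_coords (\<lambda>_. lborel))"
    unfolding B_def using bI dI by measurable
  have B_eq: "B = {y \<in> space (PiM chart_coords (\<lambda>_. lborel)). (\<forall>i\<in>?J. 0 \<le> y i) \<and> y d < \<epsilon> \<and>
                         y b \<in> {0..<\<epsilon> * (1 - (\<Sum>i\<in>?J. y i))}}"
    by (auto simp: B_def)
  have overlap_sub: "escape_region \<epsilon> b \<inter> escape_region \<epsilon> d \<subseteq> B"
  proof
    fix y assume y: "y \<in> escape_region \<epsilon> b \<inter> escape_region \<epsilon> d"
    let ?rest = "\<Sum>i\<in>chart_coords - {d}. y i"
    have "0 \<le> ?rest" using y by (auto simp: escape_region_def intro: sum_nonneg)
    then have "\<epsilon> * (1 - ?rest) \<le> \<epsilon>" using eps by (simp add: mult_left_le)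
    then have "y d < \<epsilon>" using y by (auto simp: escape_region_def)
    then show "y \<in> B" using y by (auto simp: escape_region_def B_def chart_dom_def)
  qed
  have "emeasure chart_dom B = ennreal \<epsilon> *
          (\<integral>\<^sup>+z. indicator {z \<in> space (PiM ?J (\<lambda>_. lborel)). (\<forall>i\<in>?J. 0 \<le> z i) \<and> z d < \<epsilon>} z
                 * ennreal (1 - (\<Sum>i\<in>?J. z i)) \<partial>PiM ?J (\<lambda>_. lborel))"
    unfolding chart_dom_def
    by (rule emeasure_strip[OF _ bI eps _ _ emeasure_interval_length(1) _ B_eq B_sets])
       (use dJ d in \<open>measurable, auto\<close>)
  also have "\<dots> \<le> ennreal \<epsilon> * ennreal \<epsilon>"
    by (intro mult_left_mono nn_integral_strip_le dJ eps) auto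
  finally have "emeasure chart_dom B \<le> ennreal (\<epsilon> * \<epsilon>)" using eps by (simp add: ennreal_mult')
  moreover have "emeasure chart_dom (escape_region \<epsilon> b \<inter> escape_region \<epsilon> d) \<le> emeasure chart_dom B"
    using overlap_sub B_sets by (intro emeasure_mono) (auto simp: chart_dom_def)
  ultimately show ?thesis by simp
qed

abbreviation chart_law :: "('a::{finite,linorder} \<Rightarrow> real) measure" where
  "chart_law \<equiv> uniform_measure chart_dom chart_simplex"

lemma prob_space_chart_law: "prob_space (chart_law :: ('a::{finite,linorder} \<Rightarrow> real) measure)"
  by (rule prob_space_uniform_measure) (simp_all add: emeasure_chart_simplex)

text \<open>Probabilities under the uniform law are volumes scaled by (N-1)!, the inverse volume of
  the simplex.\<close>

lemma measure_chart_law: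
  fixes X :: "('a::{finite,linorder} \<Rightarrow> real) set"
  assumes "X \<in> sets chart_dom" "X \<subseteq> chart_simplex"
  shows "measure chart_law X = measure chart_dom X * fact (CARD('a) - 1)"
proof -
  have "measure chart_dom (chart_simplex :: ('a \<Rightarrow> real) set) = 1 / fact (CARD('a) - 1)"
    by (simp add: measure_def emeasure_chart_simplex)
  moreover have "chart_simplex \<inter> X = X" using assms(2) by blast
  ultimately show ?thesis
    using assms(1) by (simp add: measure_uniform_measure emeasure_chart_simplex)
qed

lemma measure_escape_region:
  fixes x :: "'a::{finite,linorder}"
  assumes x: "x \<noteq> a0" and eps: "0 \<le> \<epsilon>" "\<epsilon> \<le> 1"
  shows "measure chart_law (escape_region \<epsilon> x) = \<epsilon>"
proof -
  have "measure chart_dom (escape_region \<epsilon> x) = \<epsilon> / fact (CARD('a) - 1)"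
    using emeasure_escape_region[OF x eps(1)] eps
    by (simp add: measure_def emeasure_chart_simplex ennreal_mult'[symmetric])
  then show ?thesis
    using escape_region_sets[OF x] escape_region_subset[OF x eps] by (simp add: measure_chart_law)
qed

lemma measure_escape_overlap:
  fixes b d :: "'a::{finite,linorder}"
  assumes b: "b \<noteq> a0" and d: "d \<noteq> a0" "d \<noteq> b" and eps: "0 \<le> \<epsilon>" "\<epsilon> \<le> 1"
  shows "measure chart_law (escape_region \<epsilon> b \<inter> escape_region \<epsilon> d) \<le> \<epsilon> * \<epsilon> * fact (CARD('a) - 1)"
proof -
  have "measure chart_dom (escape_region \<epsilon> b \<inter> escape_region \<epsilon> d) \<le> \<epsilon> * \<epsilon>"
    using emeasure_escape_overlap[OF b d eps(1)] eps
    by (simp add: measure_def enn2real_leI)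
  moreover have "escape_region \<epsilon> b \<inter> escape_region \<epsilon> d \<in> sets chart_dom"
    using escape_region_sets b d by blast
  moreover have "escape_region \<epsilon> b \<inter> escape_region \<epsilon> d \<subseteq> chart_simplex"
    using escape_region_subset[OF b eps] by blast
  ultimately show ?thesis by (simp add: measure_chart_law)
qed

text \<open>The rules g for the two shifted laws already disagree on the symmetric difference of the
  escape regions, whose probability is 2\<epsilon> up to the overlap term of order \<epsilon>^2.\<close>

lemma disagreement_lower_bound:
  fixes b d :: "'a::{finite,linorder}"
  assumes b: "b \<noteq> a0" and d: "d \<noteq> a0" "d \<noteq> b" and eps: "0 < \<epsilon>" "\<epsilon> < 1"
  shows "2 * \<epsilon> - 2 * (\<epsilon> * \<epsilon> * fact (CARD('a) - 1))
           \<le> measure unifS {s. g s (shift_mass \<epsilon> b) \<noteq> g s (shift_mass \<epsilon> d)}"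
proof -
  interpret U: prob_space "chart_law :: ('a \<Rightarrow> real) measure" by (rule prob_space_chart_law)
  define T where "T = {s. g s (shift_mass \<epsilon> b) \<noteq> g s (shift_mass \<epsilon> d)}"
  define Eb Ed where "Eb = escape_region \<epsilon> b" and "Ed = escape_region \<epsilon> d"
  have eps_le: "0 \<le> \<epsilon>" "\<epsilon> \<le> 1" using eps by auto
  have lift_law: "lift \<in> measurable chart_law borel"
    using lift_measurable by (simp add: measurable_cong_sets[OF sets_uniform_measure refl])
  have T_law: "measure unifS T = measure chart_law (lift -` T \<inter> space chart_law)"
    unfolding unifS_def by (rule measure_distr[OF lift_law]) (simp add: T_def g_disagreement_borel)
  have E_sets: "Eb \<in> U.events" "Ed \<in> U.events"
    using escape_region_sets b d by (auto simp: Eb_def Ed_def)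
  have preimage_sets: "lift -` T \<inter> space chart_law \<in> U.events"
    by (rule measurable_sets[OF lift_law]) (simp add: T_def g_disagreement_borel)
  have "(Eb - Ed) \<union> (Ed - Eb) \<subseteq> lift -` T \<inter> space chart_law"
  proof
    fix y assume y: "y \<in> (Eb - Ed) \<union> (Ed - Eb)"
    then have y_simplex: "y \<in> chart_simplex"
      using escape_region_subset[OF b eps_le] escape_region_subset[OF d(1) eps_le]
      by (auto simp: Eb_def Ed_def)
    with y show "y \<in> lift -` T \<inter> space chart_law"
      using g_shift_mass_iff[OF b eps y_simplex] g_shift_mass_iff[OF d(1) eps y_simplex]
      by (auto simp: T_def Eb_def Ed_def chart_simplex_def)
  qed
  then have "U.prob ((Eb - Ed) \<union> (Ed - Eb)) \<le> measure unifS T"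
    unfolding T_law using preimage_sets by (rule U.finite_measure_mono)
  moreover have "U.prob ((Eb - Ed) \<union> (Ed - Eb)) = U.prob (Eb - Ed) + U.prob (Ed - Eb)"
    by (rule U.finite_measure_Union) (use E_sets in auto)
  moreover have "U.prob (Eb - Ed) = U.prob Eb - U.prob (Eb \<inter> Ed)"
    and "U.prob (Ed - Eb) = U.prob Ed - U.prob (Eb \<inter> Ed)"
    using E_sets by (simp_all add: U.finite_measure_Diff' Int_commute)
  moreover have "U.prob Eb = \<epsilon>" "U.prob Ed = \<epsilon>"
    using measure_escape_region[OF b eps_le] measure_escape_region[OF d(1) eps_le]
    by (auto simp: Eb_def Ed_def)
  moreover have "U.prob (Eb \<inter> Ed) \<le> \<epsilon> * \<epsilon> * fact (CARD('a) - 1)"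
    using measure_escape_overlap[OF b d eps_le] by (simp add: Eb_def Ed_def)
  ultimately show ?thesis by (simp add: T_def)
qed

lemma constant_two_optimal:
  fixes c :: real
  assumes N: "CARD('a::{finite,linorder}) \<ge> 3" and c: "c < 2"
  shows "\<exists>p q :: 'a \<Rightarrow> real. is_prob p \<and> is_prob q \<and> p \<noteq> q \<and>
           measure unifS {s. g s p \<noteq> g s q} > c * tv_dist p q"
proof -
  have "2 \<le> card (chart_coords :: 'a set)" using N by (simp add: card_Diff_singleton)
  then obtain S where "S \<subseteq> (chart_coords :: 'a set)" "card S = 2" by (meson ex_card)
  then obtain b d :: 'a where b: "b \<noteq> a0" and d: "d \<noteq> a0" "d \<noteq> b"
    by (auto simp: card_2_iff)
  define F :: real where "F = fact (CARD('a) - 1)"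
  define \<epsilon> where "\<epsilon> = min (1/2) ((2 - c) / (4 * F))"
  have F: "F > 0" by (simp add: F_def)
  have eps: "0 < \<epsilon>" "\<epsilon> < 1" using c F by (auto simp: \<epsilon>_def)
  have "\<epsilon> * F \<le> (2 - c) / (4 * F) * F"
    using F by (intro mult_right_mono) (auto simp: \<epsilon>_def)
  also have "\<dots> = (2 - c) / 4" using F by simp
  finally have overlap_small: "2 * (\<epsilon> * \<epsilon> * F) \<le> \<epsilon> * ((2 - c) / 2)"
    using eps mult_left_mono[of "\<epsilon> * F" "(2 - c) / 4" "2 * \<epsilon>"] by (simp add: algebra_simps)
  have margin: "c * \<epsilon> < 2 * \<epsilon> - \<epsilon> * ((2 - c) / 2)"
  proof -
    have "2 * \<epsilon> - \<epsilon> * ((2 - c) / 2) - c * \<epsilon> = \<epsilon> * (2 - c) / 2" by (simp add: field_simps)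
    moreover have "0 < \<epsilon> * (2 - c) / 2" using eps c by simp
    ultimately show ?thesis by linarith
  qed
  have lower: "2 * \<epsilon> - 2 * (\<epsilon> * \<epsilon> * F)
          \<le> measure unifS {s. g s (shift_mass \<epsilon> b) \<noteq> g s (shift_mass \<epsilon> d)}"
    unfolding F_def by (rule disagreement_lower_bound[OF b d eps])
  have tv: "tv_dist (shift_mass \<epsilon> b) (shift_mass \<epsilon> d) = \<epsilon>"
    using tv_dist_shift_mass[OF b d(1) d(2)[symmetric]] eps by simp
  have "c * tv_dist (shift_mass \<epsilon> b) (shift_mass \<epsilon> d)
          < measure unifS {s. g s (shift_mass \<epsilon> b) \<noteq> g s (shift_mass \<epsilon> d)}"
    unfolding tv using lower overlap_small margin by linarith
  then show ?thesis
    using is_prob_shift_mass[OF b] is_prob_shift_mass[OF d(1)] shift_mass_inj[OF b d(2)[symmetric]] eps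
    by (intro exI[of _ "shift_mass \<epsilon> b"] exI[of _ "shift_mass \<epsilon> d"]) auto
qed

subsection \<open>Part (2): a lower bound valid for every coupling\<close>

text \<open>A map f on A without fixed points disagrees on at least 2(N-1) ordered pairs: fix u, and
  pair every w \<noteq> u with one of u, f u on which f differs from f w; these pairs and their
  reverses are 2(N-1) distinct disagreeing pairs.\<close>

lemma card_disagreeing_pairs:
  fixes f :: "'a::finite \<Rightarrow> 'a"
  assumes no_fixpoint: "\<And>a. f a \<noteq> a"
  shows "2 * (CARD('a) - 1) \<le> card {(a, b). f a \<noteq> f b}"
proof -
  obtain u :: 'a where True by blast
  define v where "v = f u"
  have fv: "f v \<noteq> f u" using no_fixpoint[of v] by (simp add: v_def)
  define partner where "partner w = (if f w \<noteq> f u then u else v)" for w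
  have partner_disagrees: "f w \<noteq> f (partner w)" for w
    using fv by (auto simp: partner_def)
  have partner_cases: "partner w = u \<or> partner w = v" for w
    by (auto simp: partner_def)
  have partner_v: "partner v = u" using fv by (auto simp: partner_def)
  define S1 where "S1 = (\<lambda>w. (w, partner w)) ` (UNIV - {u})"
  define S2 where "S2 = (\<lambda>w. (partner w, w)) ` (UNIV - {u})"
  have card_S1: "card S1 = CARD('a) - 1" unfolding S1_def
    by (subst card_image) (auto intro: inj_onI)
  have card_S2: "card S2 = CARD('a) - 1" unfolding S2_def
    by (subst card_image) (auto intro: inj_onI)
  have disjoint: "S1 \<inter> S2 = {}"
  proof (rule ccontr)
    assume "S1 \<inter> S2 \<noteq> {}"
    then obtain w w' where w: "w \<noteq> u" "w' \<noteq> u" "w = partner w'" "partner w = w'"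
      unfolding S1_def S2_def by auto
    then have "w = v" using partner_cases[of w'] by auto
    then show False using w partner_v by auto
  qed
  have "S1 \<union> S2 \<subseteq> {(a, b). f a \<noteq> f b}"
    unfolding S1_def S2_def using partner_disagrees by (auto simp: eq_commute)
  then have "card (S1 \<union> S2) \<le> card {(a, b). f a \<noteq> f b}"
    by (intro card_mono) simp
  moreover have "card (S1 \<union> S2) = 2 * (CARD('a) - 1)"
    using disjoint card_S1 card_S2 by (subst card_Un_disjoint) auto
  ultimately show ?thesis by simp
qed

lemma exists_ge_average:
  fixes f :: "'i \<Rightarrow> real"
  assumes "finite S" "S \<noteq> {}" "K \<le> (\<Sum>x\<in>S. f x)"
  shows "\<exists>x\<in>S. K / real (card S) \<le> f x"
proof (rule ccontr)
  assume "\<not> ?thesis"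
  then have "(\<Sum>x\<in>S. f x) < (\<Sum>x\<in>S. K / real (card S))"
    using assms by (intro sum_strict_mono) auto
  also have "\<dots> = K" using assms by simp
  finally show False using assms by simp
qed

definition avoid :: "'a::finite \<Rightarrow> 'a \<Rightarrow> real" where
  "avoid a x = (if x = a then 0 else 1 / (real CARD('a) - 1))"

lemma is_prob_avoid:
  assumes "CARD('a::finite) \<ge> 2"
  shows "is_prob (avoid (a :: 'a))"
proof -
  have "(\<Sum>x\<in>UNIV. avoid a x) = (\<Sum>x\<in>UNIV - {a}. 1 / (real CARD('a) - 1))"
    by (rule sum.mono_neutral_cong_right) (auto simp: avoid_def)
  also have "\<dots> = 1" using assms by (simp add: card_Diff_singleton of_nat_diff)
  finally show ?thesis using assms by (auto simp: is_prob_def avoid_def)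
qed

lemma card_ge_2_if_distinct:
  fixes a b :: "'a::finite"
  assumes "a \<noteq> b"
  shows "CARD('a) \<ge> 2"
  using card_mono[of UNIV "{a, b}"] assms by simp

lemma tv_dist_avoid:
  fixes a b :: "'a::finite"
  assumes ab: "a \<noteq> b"
  shows "tv_dist (avoid a) (avoid b) = 1 / (real CARD('a) - 1)"
proof -
  have N: "real CARD('a) \<ge> 2" using card_ge_2_if_distinct[OF ab] by simp
  have "(\<Sum>x\<in>UNIV. \<bar>avoid a x - avoid b x\<bar>) = (\<Sum>x\<in>{a, b}. \<bar>avoid a x - avoid b x\<bar>)"
    by (rule sum.mono_neutral_right) (auto simp: avoid_def)
  also have "\<dots> = 2 / (real CARD('a) - 1)" using ab N by (simp add: avoid_def)
  finally show ?thesis by (simp add: tv_dist_def)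
qed

lemma avoid_inj:
  fixes a b :: "'a::finite"
  assumes ab: "a \<noteq> b"
  shows "avoid a \<noteq> avoid b"
proof
  assume "avoid a = avoid b"
  then have "avoid a a = avoid b a" by simp
  then show False using ab card_ge_2_if_distinct[OF ab] by (simp add: avoid_def)
qed

lemma (in prob_space) expected_disagreeing_pairs:
  fixes X :: "'i::finite \<Rightarrow> 'a \<Rightarrow> 'i"
  assumes meas[measurable]: "\<And>a. X a \<in> measurable M (count_space UNIV)"
    and avoids: "\<And>a. AE \<omega> in M. X a \<omega> \<noteq> a"
  shows "2 * (real CARD('i) - 1) \<le> (\<Sum>ab\<in>{(a, b). a \<noteq> b}. prob {\<omega> \<in> space M. X (fst ab) \<omega> \<noteq> X (snd ab) \<omega>})"
proof -
  define Off where "Off = {(a, b). (a::'i) \<noteq> b}"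
  define D where "D ab = {\<omega> \<in> space M. X (fst ab) \<omega> \<noteq> X (snd ab) \<omega>}" for ab
  have D_events: "D ab \<in> events" for ab unfolding D_def by measurable
  have "AE \<omega> in M. \<forall>a. X a \<omega> \<noteq> a" using avoids by (simp add: AE_all_countable)
  then have "AE \<omega> in M. 2 * (real CARD('i) - 1) \<le> (\<Sum>ab\<in>Off. indicator (D ab) \<omega>)"
  proof (rule AE_mp, intro AE_I2 impI)
    fix \<omega> assume \<omega>: "\<omega> \<in> space M" and no_fixpoint: "\<forall>a. X a \<omega> \<noteq> a"
    have "{ab \<in> Off. \<omega> \<in> D ab} = {(a, b). X a \<omega> \<noteq> X b \<omega>}"
      using \<omega> by (auto simp: Off_def D_def)
    then have "(\<Sum>ab\<in>Off. indicator (D ab) \<omega>) = real (card {(a, b). X a \<omega> \<noteq> X b \<omega>})"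
      by (simp add: indicator_def of_bool_def[symmetric] Int_def)
    moreover have "2 * (CARD('i) - 1) \<le> card {(a, b). X a \<omega> \<noteq> X b \<omega>}"
      using card_disagreeing_pairs[of "\<lambda>a. X a \<omega>"] no_fixpoint by simp
    ultimately show "2 * (real CARD('i) - 1) \<le> (\<Sum>ab\<in>Off. indicator (D ab) \<omega>)"
      by (simp add: of_nat_diff)
  qed
  then have "expectation (\<lambda>_. 2 * (real CARD('i) - 1)) \<le> expectation (\<lambda>\<omega>. \<Sum>ab\<in>Off. indicator (D ab) \<omega>)"
    using D_events
    by (intro integral_mono_AE) (auto simp: less_top[symmetric])
  also have "\<dots> = (\<Sum>ab\<in>Off. prob (D ab))"
    using D_events
    by (subst Bochner_Integration.integral_sum) (auto simp: less_top[symmetric])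
  finally show ?thesis by (simp add: Off_def D_def prob_space)
qed

text \<open>Part (2): apply the previous lemma to X a = Z (avoid a) and average over the N(N-1) pairs; some
  pair disagrees with probability at least 2/N = 2(1 - 1/N) times the distance 1/(N-1).\<close>

lemma coupling_lower_bound:
  fixes M :: "'b measure" and Z :: "('a::finite \<Rightarrow> real) \<Rightarrow> 'b \<Rightarrow> 'a"
  assumes N: "CARD('a) \<ge> 2" and M: "prob_space M"
    and Z: "\<forall>p. is_prob p \<longrightarrow> Z p \<in> measurable M (count_space UNIV) \<and>
                     (\<forall>a. measure M {\<omega> \<in> space M. Z p \<omega> = a} = p a)"
  shows "\<exists>p q. is_prob p \<and> is_prob q \<and> p \<noteq> q \<and>
                measure M {\<omega> \<in> space M. Z p \<omega> \<noteq> Z q \<omega>}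
                  \<ge> 2 * (1 - 1 / real CARD('a)) * tv_dist p q"
proof -
  interpret prob_space M by (rule M)
  define X where "X a = Z (avoid a)" for a
  have X_meas: "X a \<in> measurable M (count_space UNIV)" for a
    using Z is_prob_avoid[OF N] by (simp add: X_def)
  have X_avoids: "AE \<omega> in M. X a \<omega> \<noteq> a" for a
  proof -
    have "prob {\<omega> \<in> space M. X a \<omega> = a} = 0"
      using Z is_prob_avoid[OF N, of a] by (simp add: X_def avoid_def)
    moreover have "{\<omega> \<in> space M. X a \<omega> = a} \<in> events"
      using X_meas by measurable
    ultimately show ?thesis by (simp add: prob_eq_0)
  qed
  have card_pairs: "card {(a, b). (a::'a) \<noteq> b} = CARD('a) * (CARD('a) - 1)"
  proof -
    have "{(a, b). (a::'a) \<noteq> b} = Sigma UNIV (\<lambda>a. UNIV - {a})" by auto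
    then show ?thesis by (simp add: card_SigmaI card_Diff_singleton)
  qed
  then have "{(a, b). (a::'a) \<noteq> b} \<noteq> {}" using N by (intro notI) simp
  from exists_ge_average[OF _ this expected_disagreeing_pairs[OF X_meas X_avoids]]
  obtain ab where "ab \<in> {(a, b). (a::'a) \<noteq> b}"
    and "2 * (real CARD('a) - 1) / real (card {(a, b). (a::'a) \<noteq> b})
           \<le> prob {\<omega> \<in> space M. X (fst ab) \<omega> \<noteq> X (snd ab) \<omega>}"
    by auto
  moreover have "2 * (real CARD('a) - 1) / real (card {(a, b). (a::'a) \<noteq> b}) = 2 / real CARD('a)"
    using N by (simp add: card_pairs of_nat_diff field_simps)
  ultimately obtain a b where ab: "a \<noteq> b"
    and far: "2 / real CARD('a) \<le> prob {\<omega> \<in> space M. X a \<omega> \<noteq> X b \<omega>}"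
    by auto
  have "2 * (1 - 1 / real CARD('a)) * tv_dist (avoid a) (avoid b) = 2 / real CARD('a)"
    using N tv_dist_avoid[OF ab] by (simp add: field_simps)
  then show ?thesis
    using is_prob_avoid[OF N] avoid_inj[OF ab] far unfolding X_def by metis
qed

theorem proposition10:
  shows "(CARD('a::{finite,linorder}) \<ge> 3 \<longrightarrow>
           (\<forall>c < 2. \<exists>p q :: 'a \<Rightarrow> real. is_prob p \<and> is_prob q \<and> p \<noteq> q \<and>
              measure unifS {s. g s p \<noteq> g s q} > c * tv_dist p q))
       \<and> (CARD('a) \<ge> 2 \<longrightarrow>
           (\<forall>(M :: 'b measure) (Z :: ('a \<Rightarrow> real) \<Rightarrow> 'b \<Rightarrow> 'a).
              prob_space M \<and>
              (\<forall>p. is_prob p \<longrightarrow> Z p \<in> measurable M (count_space UNIV) \<and>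
                     (\<forall>a. measure M {\<omega> \<in> space M. Z p \<omega> = a} = p a))
              \<longrightarrow> (\<exists>p q. is_prob p \<and> is_prob q \<and> p \<noteq> q \<and>
                     measure M {\<omega> \<in> space M. Z p \<omega> \<noteq> Z q \<omega>}
                       \<ge> 2 * (1 - 1 / real CARD('a)) * tv_dist p q)))"
proof (intro conjI impI allI)
  fix c :: real
  assume "CARD('a) \<ge> 3" and "c < 2"
  then show "\<exists>p q :: 'a \<Rightarrow> real. is_prob p \<and> is_prob q \<and> p \<noteq> q \<and>
               measure unifS {s. g s p \<noteq> g s q} > c * tv_dist p q"
    by (rule constant_two_optimal)
next
  fix M :: "'b measure" and Z :: "('a \<Rightarrow> real) \<Rightarrow> 'b \<Rightarrow> 'a"
  assume "CARD('a) \<ge> 2" and "prob_space M \<and>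
    (\<forall>p. is_prob p \<longrightarrow> Z p \<in> measurable M (count_space UNIV) \<and>
           (\<forall>a. measure M {\<omega> \<in> space M. Z p \<omega> = a} = p a))"
  then show "\<exists>p q. is_prob p \<and> is_prob q \<and> p \<noteq> q \<and>
               measure M {\<omega> \<in> space M. Z p \<omega> \<noteq> Z q \<omega>}
                 \<ge> 2 * (1 - 1 / real CARD('a)) * tv_dist p q"
    by (intro coupling_lower_bound) auto
qed

end
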